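(* For every integer $k\ge 1$ there is a constant $c_k>0$, depending only on $k$, such that the following holds. Let $D$ be a finite set with $|D|=2^L$ for some integer $L\ge 0$, let $n\ge 0$ and $T\ge 1$ be integers, and let $f:D^{n+1}\to\mathbb{R}$ be of the form $$f(x_0,x_1,\dots,x_n)=\sum_{t=1}^T f_t(x_0,x_1,\dots,x_n),$$ where each $f_t:D^{n+1}\to\mathbb{R}$ depends on at most $k$ of the variables $x_0,\dots,x_n$. Let $X_0,X_1,\dots,X_n$ be independent random variables, each uniformly distributed on $D$. Then $$\mathbb{E}\Big[\max_{x\in D} f(x,X_1,\dots,X_n)-f(X_0,X_1,\dots,X_n)\Big]\;\ge\; c_k\,T^{-1}|D|^{-k}\max_{x^+,x^-,x_1,\dots,x_n\in D}\big(f(x^+,x_1,\dots,x_n)-f(x^-,x_1,\dots,x_n)\big).$$ *)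

theory Defs
  imports "HOL-Probability.Probability"
begin

text \<open>Points of D^(n+1) are extensional functions on the index set {0..n}.\<close>

definition depends_on_at_most ::
  "nat \<Rightarrow> nat \<Rightarrow> 'a set \<Rightarrow> ((nat \<Rightarrow> 'a) \<Rightarrow> real) \<Rightarrow> bool" where
  "depends_on_at_most k n D g \<longleftrightarrow>
     (\<exists>S \<subseteq> {0..n}. card S \<le> k \<and>
        (\<forall>x\<in>PiE {0..n} (\<lambda>_. D). \<forall>y\<in>PiE {0..n} (\<lambda>_. D).
           (\<forall>i\<in>S. x i = y i) \<longrightarrow> g x = g y))"

end

theory Submission
  imports Defs
begin

text \<open>Let \<open>\<alpha>, \<beta>, z\<close> attain the maximal gain. Then \<open>d x = f (x(0 := \<alpha>)) - f (x(0 := \<beta>))\<close> is a sum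
  of \<open>T\<close> functions, each depending on at most \<open>k - 1\<close> coordinates other than \<open>0\<close>. For such sums,
  Moebius inversion of the partial means \<open>Q \<mapsto> E\<^sub>x d (z on Q, x off Q)\<close> bounds \<open>|d z|\<close> by
  \<open>T 4\<^sup>k\<^sup>-\<^sup>1 |D|\<^sup>k\<^sup>-\<^sup>1 E |d|\<close>. Finally \<open>|d X|\<close> is at most the sum over \<open>a \<in> D\<close> of the regrets at
  \<open>X(0 := a)\<close>, and resampling coordinate \<open>0\<close> turns the mean of this sum into \<open>|D|\<close> times the
  expected regret.\<close>

definition moebius_coeff :: "'a set \<Rightarrow> ('a set \<Rightarrow> 'b::comm_ring_1) \<Rightarrow> 'b" where
  "moebius_coeff R G = (\<Sum>Q\<in>Pow R. (-1) ^ card (R - Q) * G Q)"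

lemma moebius_coeff_insert:
  assumes "finite R" "j \<notin> R"
  shows "moebius_coeff (insert j R) G = moebius_coeff R (\<lambda>Q. G (insert j Q) - G Q)"
proof -
  have inj: "inj_on (insert j) (Pow R)"
    using assms(2) by (auto simp: inj_on_def)
  have "moebius_coeff (insert j R) G = (\<Sum>Q\<in>Pow R. (-1) ^ card (insert j R - Q) * G Q)
      + (\<Sum>Q\<in>insert j ` Pow R. (-1) ^ card (insert j R - Q) * G Q)"
    unfolding moebius_coeff_def Pow_insert using assms by (subst sum.union_disjoint) auto
  also have "(\<Sum>Q\<in>insert j ` Pow R. (-1) ^ card (insert j R - Q) * G Q)
      = (\<Sum>Q\<in>Pow R. (-1) ^ card (R - Q) * G (insert j Q))"
    using assms(2) by (simp add: sum.reindex[OF inj] insert_Diff_if)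
  also have "(\<Sum>Q\<in>Pow R. (-1) ^ card (insert j R - Q) * G Q)
      = (\<Sum>Q\<in>Pow R. - ((-1) ^ card (R - Q) * G Q))"
  proof (rule sum.cong)
    fix Q assume "Q \<in> Pow R"
    then have "insert j R - Q = insert j (R - Q)" "j \<notin> R - Q" using assms(2) by auto
    then show "(-1) ^ card (insert j R - Q) * G Q = - ((-1) ^ card (R - Q) * G Q)"
      using assms(1) by simp
  qed simp
  finally show ?thesis unfolding moebius_coeff_def
    by (simp add: sum_subtractf sum_negf right_diff_distrib)
qed

lemma moebius_coeff_diff: "moebius_coeff R (\<lambda>Q. G Q - H Q) = moebius_coeff R G - moebius_coeff R H"
  unfolding moebius_coeff_def by (simp add: sum_subtractf right_diff_distrib)

lemma moebius_coeff_sum: "moebius_coeff R (\<lambda>Q. \<Sum>t\<in>J. G t Q) = (\<Sum>t\<in>J. moebius_coeff R (G t))"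
  unfolding moebius_coeff_def by (simp add: sum_distrib_left sum.swap[of _ J])

lemma moebius_coeff_eq_0:
  assumes "finite R" "j \<in> R" "\<And>Q. G (insert j Q) = G Q"
  shows "moebius_coeff R G = 0"
proof -
  have "moebius_coeff R G = moebius_coeff (R - {j}) (\<lambda>Q. G (insert j Q) - G Q)"
    using moebius_coeff_insert[of "R - {j}" j G] assms(1,2) by (simp add: insert_absorb)
  then show ?thesis using assms(3) by (simp add: moebius_coeff_def)
qed

lemma sum_Pow_moebius_coeff: "finite S \<Longrightarrow> (\<Sum>R\<in>Pow S. moebius_coeff R G) = G S"
proof (induction S arbitrary: G rule: finite_induct)
  case empty
  then show ?case by (simp add: moebius_coeff_def)
next
  case (insert j S)
  have inj: "inj_on (insert j) (Pow S)"
    using insert(2) by (auto simp: inj_on_def)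
  have "(\<Sum>R\<in>Pow (insert j S). moebius_coeff R G)
      = (\<Sum>R\<in>Pow S. moebius_coeff R G) + (\<Sum>R\<in>Pow S. moebius_coeff (insert j R) G)"
    unfolding Pow_insert using insert(1,2)
    by (subst sum.union_disjoint) (auto simp: sum.reindex[OF inj])
  also have "(\<Sum>R\<in>Pow S. moebius_coeff (insert j R) G)
      = (\<Sum>R\<in>Pow S. moebius_coeff R (\<lambda>Q. G (insert j Q)) - moebius_coeff R G)"
  proof (rule sum.cong)
    fix R assume "R \<in> Pow S"
    then have "finite R" "j \<notin> R" using insert(1,2) finite_subset by auto
    then show "moebius_coeff (insert j R) G
        = moebius_coeff R (\<lambda>Q. G (insert j Q)) - moebius_coeff R G"
      by (simp add: moebius_coeff_insert moebius_coeff_diff)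
  qed simp
  finally show ?case using insert(3) by (simp add: sum_subtractf)
qed

lemma abs_moebius_coeff_le:
  fixes G :: "'a set \<Rightarrow> 'b::linordered_idom"
  assumes "finite R" "\<And>Q. Q \<subseteq> R \<Longrightarrow> \<bar>G Q\<bar> \<le> B"
  shows "\<bar>moebius_coeff R G\<bar> \<le> 2 ^ card R * B"
proof -
  have "\<bar>moebius_coeff R G\<bar> \<le> (\<Sum>Q\<in>Pow R. \<bar>G Q\<bar>)"
    unfolding moebius_coeff_def by (rule order_trans[OF sum_abs]) (simp add: abs_mult)
  also have "\<dots> \<le> (\<Sum>Q\<in>Pow R. B)"
    using assms(2) by (intro sum_mono) auto
  finally show ?thesis using assms(1) by (simp add: card_Pow)
qed

definition depends_only_on :: "'i set \<Rightarrow> 'a set \<Rightarrow> 'i set \<Rightarrow> (('i \<Rightarrow> 'a) \<Rightarrow> 'b) \<Rightarrow> bool" where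
  "depends_only_on I D S g \<longleftrightarrow>
     (\<forall>x\<in>PiE I (\<lambda>_. D). \<forall>y\<in>PiE I (\<lambda>_. D). (\<forall>i\<in>S. x i = y i) \<longrightarrow> g x = g y)"

lemma depends_on_at_most_iff:
  "depends_on_at_most k n D g \<longleftrightarrow> (\<exists>S\<subseteq>{0..n}. card S \<le> k \<and> depends_only_on {0..n} D S g)"
  unfolding depends_on_at_most_def depends_only_on_def ..

lemma depends_only_onD:
  "depends_only_on I D S g \<Longrightarrow> x \<in> PiE I (\<lambda>_. D) \<Longrightarrow> y \<in> PiE I (\<lambda>_. D) \<Longrightarrow>
    (\<And>i. i \<in> S \<Longrightarrow> x i = y i) \<Longrightarrow> g x = g y"
  unfolding depends_only_on_def by blast

lemma fun_upd_PiE_mem: "x \<in> PiE I (\<lambda>_. D) \<Longrightarrow> j \<in> I \<Longrightarrow> a \<in> D \<Longrightarrow> x(j := a) \<in> PiE I (\<lambda>_. D)"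
  by (metis PiE_fun_upd insert_absorb)

lemma override_on_PiE_mem:
  "x \<in> PiE I (\<lambda>_. D) \<Longrightarrow> z \<in> PiE I (\<lambda>_. D) \<Longrightarrow> override_on x z Q \<in> PiE I (\<lambda>_. D)"
  by (auto simp: PiE_def extensional_def Pi_def override_on_def)

lemma sum_PiE_sum_fun_upd:
  fixes g :: "('i \<Rightarrow> 'a) \<Rightarrow> real"
  assumes "j \<in> I"
  shows "(\<Sum>x\<in>PiE I (\<lambda>_. D). \<Sum>a\<in>D. g (x(j := a)))
    = real (card D) * (\<Sum>x\<in>PiE I (\<lambda>_. D). g x)"
proof -
  let ?O = "PiE I (\<lambda>_. D)"
  define \<phi> :: "('i \<Rightarrow> 'a) \<times> 'a \<Rightarrow> ('i \<Rightarrow> 'a) \<times> 'a"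
    where "\<phi> = (\<lambda>(x, a). (x(j := a), x j))"
  have bij: "bij_betw \<phi> (?O \<times> D) (?O \<times> D)"
    by (rule bij_betw_byWitness[where f' = \<phi>]) (auto simp: \<phi>_def fun_upd_PiE_mem assms PiE_mem)
  have "(\<Sum>x\<in>?O. \<Sum>a\<in>D. g (x(j := a))) = (\<Sum>p\<in>?O \<times> D. g (fst (\<phi> p)))"
    by (simp add: sum.cartesian_product \<phi>_def case_prod_beta)
  also have "\<dots> = (\<Sum>p\<in>?O \<times> D. g (fst p))"
    using sum.reindex_bij_betw[OF bij, of "\<lambda>p. g (fst p)"] by simp
  also have "\<dots> = (\<Sum>x\<in>?O. \<Sum>a\<in>D. g x)"
    using sum.cartesian_product[of "\<lambda>x a. g x" D ?O] by (simp add: case_prod_beta)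
  also have "\<dots> = real (card D) * (\<Sum>x\<in>?O. g x)"
    by (simp add: sum_distrib_left mult.commute)
  finally show ?thesis .
qed

lemma sum_PiE_fun_upd_le:
  fixes g :: "('i \<Rightarrow> 'a) \<Rightarrow> real"
  assumes "j \<in> I" "c \<in> D" "finite D" "\<And>x. x \<in> PiE I (\<lambda>_. D) \<Longrightarrow> g x \<ge> 0"
  shows "(\<Sum>x\<in>PiE I (\<lambda>_. D). g (x(j := c))) \<le> real (card D) * (\<Sum>x\<in>PiE I (\<lambda>_. D). g x)"
proof -
  have "(\<Sum>x\<in>PiE I (\<lambda>_. D). g (x(j := c))) \<le> (\<Sum>x\<in>PiE I (\<lambda>_. D). \<Sum>a\<in>D. g (x(j := a)))"
    using assms by (intro sum_mono member_le_sum) (auto simp: fun_upd_PiE_mem)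
  then show ?thesis using sum_PiE_sum_fun_upd[OF assms(1), of g D] by simp
qed

lemma sum_PiE_override_on_le:
  fixes g :: "('i \<Rightarrow> 'a) \<Rightarrow> real"
  assumes "finite Q" "Q \<subseteq> I" "finite D" "z \<in> PiE I (\<lambda>_. D)"
    "\<And>x. x \<in> PiE I (\<lambda>_. D) \<Longrightarrow> g x \<ge> 0"
  shows "(\<Sum>x\<in>PiE I (\<lambda>_. D). g (override_on x z Q))
    \<le> real (card D) ^ card Q * (\<Sum>x\<in>PiE I (\<lambda>_. D). g x)"
  using assms(1,2)
proof (induction Q rule: finite_induct)
  case (insert j Q)
  have "(\<Sum>x\<in>PiE I (\<lambda>_. D). g (override_on x z (insert j Q)))
      = (\<Sum>x\<in>PiE I (\<lambda>_. D). g (override_on (x(j := z j)) z Q))"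
    by (simp add: override_on_insert')
  also have "\<dots> \<le> real (card D) * (\<Sum>x\<in>PiE I (\<lambda>_. D). g (override_on x z Q))"
    using insert assms by (intro sum_PiE_fun_upd_le) (auto simp: PiE_mem override_on_PiE_mem)
  also have "\<dots> \<le> real (card D) * (real (card D) ^ card Q * (\<Sum>x\<in>PiE I (\<lambda>_. D). g x))"
    using insert by (intro mult_left_mono) auto
  finally show ?case using insert by simp
qed simp

definition mean_fixing ::
    "'i set \<Rightarrow> 'a set \<Rightarrow> ('i \<Rightarrow> 'a) \<Rightarrow> 'i set \<Rightarrow> (('i \<Rightarrow> 'a) \<Rightarrow> real) \<Rightarrow> real" where
  "mean_fixing I D z Q u = (\<Sum>x\<in>PiE I (\<lambda>_. D). u (override_on x z Q)) / card (PiE I (\<lambda>_. D))"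

lemma mean_fixing_sum:
  assumes "z \<in> PiE I (\<lambda>_. D)" "\<And>x. x \<in> PiE I (\<lambda>_. D) \<Longrightarrow> h x = (\<Sum>t\<in>J. u t x)"
  shows "mean_fixing I D z Q h = (\<Sum>t\<in>J. mean_fixing I D z Q (u t))"
  using assms
  by (simp add: mean_fixing_def override_on_PiE_mem sum.swap[of _ J] sum_divide_distrib
      cong: sum.cong)

lemma mean_fixing_insert:
  assumes "depends_only_on I D S u" "j \<notin> S" "z \<in> PiE I (\<lambda>_. D)"
  shows "mean_fixing I D z (insert j Q) u = mean_fixing I D z Q u"
proof -
  have "u (override_on x z (insert j Q)) = u (override_on x z Q)" if "x \<in> PiE I (\<lambda>_. D)" for x
    using assms that
    by (intro depends_only_onD[OF assms(1)]) (auto simp: override_on_PiE_mem override_on_def)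
  then show ?thesis unfolding mean_fixing_def by (simp cong: sum.cong)
qed

lemma mean_fixing_support:
  assumes "depends_only_on I D S u" "z \<in> PiE I (\<lambda>_. D)" "finite I" "finite D" "D \<noteq> {}"
  shows "mean_fixing I D z S u = u z"
proof -
  have "u (override_on x z S) = u z" if "x \<in> PiE I (\<lambda>_. D)" for x
    using assms that by (intro depends_only_onD[OF assms(1)]) (auto simp: override_on_PiE_mem)
  moreover have "finite (PiE I (\<lambda>_. D))" "PiE I (\<lambda>_. D) \<noteq> {}"
    using assms(3-5) by (auto simp: finite_PiE PiE_eq_empty_iff)
  ultimately show ?thesis unfolding mean_fixing_def by simp
qed

lemma abs_mean_fixing_le:
  assumes "finite Q" "Q \<subseteq> I" "finite D" "z \<in> PiE I (\<lambda>_. D)"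
  shows "\<bar>mean_fixing I D z Q h\<bar>
    \<le> real (card D) ^ card Q * ((\<Sum>x\<in>PiE I (\<lambda>_. D). \<bar>h x\<bar>) / card (PiE I (\<lambda>_. D)))"
proof -
  have "\<bar>mean_fixing I D z Q h\<bar>
      \<le> (\<Sum>x\<in>PiE I (\<lambda>_. D). \<bar>h (override_on x z Q)\<bar>) / card (PiE I (\<lambda>_. D))"
    unfolding mean_fixing_def by (simp add: divide_right_mono sum_abs)
  also have "\<dots> \<le> real (card D) ^ card Q * (\<Sum>x\<in>PiE I (\<lambda>_. D). \<bar>h x\<bar>) / card (PiE I (\<lambda>_. D))"
    using assms by (intro divide_right_mono sum_PiE_override_on_le) auto
  finally show ?thesis by simp
qed

lemma sum_moebius_coeff_mean_fixing:
  assumes "finite I" "finite D" "D \<noteq> {}" "z \<in> PiE I (\<lambda>_. D)"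
    and u: "depends_only_on I D S u" and A: "Pow S \<subseteq> A" "A \<subseteq> Pow I"
  shows "(\<Sum>R\<in>A. moebius_coeff R (\<lambda>Q. mean_fixing I D z Q u)) = u z"
proof -
  have "finite S" "finite A"
    using A assms(1) by (auto intro: finite_subset)
  have "(\<Sum>R\<in>A - Pow S. moebius_coeff R (\<lambda>Q. mean_fixing I D z Q u)) = 0"
  proof (rule sum.neutral, rule ballI)
    fix R assume R: "R \<in> A - Pow S"
    then obtain j where "j \<in> R" "j \<notin> S" by auto
    moreover have "finite R" using R A assms(1) by (meson DiffD1 PowD finite_subset subsetD)
    ultimately show "moebius_coeff R (\<lambda>Q. mean_fixing I D z Q u) = 0"
      using mean_fixing_insert[OF u] assms(4) by (intro moebius_coeff_eq_0) auto
  qed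
  then have "(\<Sum>R\<in>A. moebius_coeff R (\<lambda>Q. mean_fixing I D z Q u))
      = (\<Sum>R\<in>Pow S. moebius_coeff R (\<lambda>Q. mean_fixing I D z Q u))"
    by (simp add: sum.subset_diff[OF A(1) \<open>finite A\<close>])
  also have "\<dots> = mean_fixing I D z S u"
    using \<open>finite S\<close> by (rule sum_Pow_moebius_coeff)
  also have "\<dots> = u z"
    using u assms(4,1-3) by (rule mean_fixing_support)
  finally show ?thesis .
qed

text \<open>In the Moebius expansion of \<open>h z\<close> only the at most \<open>|J| 2\<^sup>m\<close> sets below some \<open>S t\<close>
  contribute, and each coefficient is at most \<open>2\<^sup>m |D|\<^sup>m\<close> times the mean of \<open>|h|\<close>.\<close>
lemma junta_sum_bound:
  fixes h :: "('i \<Rightarrow> 'a) \<Rightarrow> real" and u :: "'t \<Rightarrow> ('i \<Rightarrow> 'a) \<Rightarrow> real"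
  assumes "finite I" "finite D" "D \<noteq> {}" "finite J" "z \<in> PiE I (\<lambda>_. D)"
    and h: "\<And>x. x \<in> PiE I (\<lambda>_. D) \<Longrightarrow> h x = (\<Sum>t\<in>J. u t x)"
    and S: "\<And>t. t \<in> J \<Longrightarrow> S t \<subseteq> I" "\<And>t. t \<in> J \<Longrightarrow> card (S t) \<le> m"
    and u: "\<And>t. t \<in> J \<Longrightarrow> depends_only_on I D (S t) (u t)"
  shows "\<bar>h z\<bar> \<le> real (card J) * 4 ^ m * real (card D) ^ m
    * ((\<Sum>x\<in>PiE I (\<lambda>_. D). \<bar>h x\<bar>) / card (PiE I (\<lambda>_. D)))"
proof -
  define E where "E = (\<Sum>x\<in>PiE I (\<lambda>_. D). \<bar>h x\<bar>) / card (PiE I (\<lambda>_. D))"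
  define F where "F = (\<lambda>Q. mean_fixing I D z Q h)"
  define A where "A = (\<Union>t\<in>J. Pow (S t))"
  have E: "E \<ge> 0" unfolding E_def by (simp add: sum_nonneg)
  have N: "real (card D) \<ge> 1" using assms(2,3) by (simp add: Suc_leI card_gt_0_iff)
  have small: "finite R \<and> card R \<le> m" if "R \<in> A" for R
  proof -
    obtain t where t: "t \<in> J" "R \<subseteq> S t" using \<open>R \<in> A\<close> unfolding A_def by auto
    moreover have "finite (S t)" using S(1)[OF t(1)] assms(1) by (rule finite_subset)
    ultimately show ?thesis using S(2)[OF t(1)] card_mono[of "S t" R] by (auto intro: finite_subset)
  qed
  have "A \<subseteq> Pow I" using S(1) unfolding A_def by auto
  have "h z = (\<Sum>t\<in>J. u t z)" using h assms(5) .
  also have "\<dots> = (\<Sum>t\<in>J. \<Sum>R\<in>A. moebius_coeff R (\<lambda>Q. mean_fixing I D z Q (u t)))"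
  proof (rule sum.cong[OF refl])
    fix t assume "t \<in> J"
    then have "Pow (S t) \<subseteq> A" unfolding A_def by auto
    then show "u t z = (\<Sum>R\<in>A. moebius_coeff R (\<lambda>Q. mean_fixing I D z Q (u t)))"
      using sum_moebius_coeff_mean_fixing[OF assms(1-3,5) u[OF \<open>t \<in> J\<close>]] \<open>A \<subseteq> Pow I\<close> by simp
  qed
  also have "\<dots> = (\<Sum>R\<in>A. moebius_coeff R F)"
    using mean_fixing_sum[OF assms(5) h] by (simp add: F_def moebius_coeff_sum sum.swap[of _ J])
  finally have "\<bar>h z\<bar> \<le> (\<Sum>R\<in>A. \<bar>moebius_coeff R F\<bar>)" by (simp add: sum_abs)
  also have "\<dots> \<le> (\<Sum>R\<in>A. 2 ^ m * (real (card D) ^ m * E))"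
  proof (rule sum_mono)
    fix R assume "R \<in> A"
    have "\<bar>F Q\<bar> \<le> real (card D) ^ m * E" if "Q \<subseteq> R" for Q
    proof -
      have "finite Q" "card Q \<le> m" "Q \<subseteq> I"
        using small[OF \<open>R \<in> A\<close>] that \<open>R \<in> A\<close> S(1) card_mono[of R Q]
        by (auto simp: A_def intro: finite_subset)
      then have "\<bar>F Q\<bar> \<le> real (card D) ^ card Q * E"
        unfolding F_def E_def using assms(2,5) by (intro abs_mean_fixing_le) auto
      also have "\<dots> \<le> real (card D) ^ m * E"
        using power_increasing[OF \<open>card Q \<le> m\<close> N] E by (rule mult_right_mono)
      finally show ?thesis .
    qed
    then have "\<bar>moebius_coeff R F\<bar> \<le> 2 ^ card R * (real (card D) ^ m * E)"
      using small[OF \<open>R \<in> A\<close>] by (intro abs_moebius_coeff_le) auto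
    also have "\<dots> \<le> 2 ^ m * (real (card D) ^ m * E)"
      using small[OF \<open>R \<in> A\<close>] E by (intro mult_right_mono power_increasing) auto
    finally show "\<bar>moebius_coeff R F\<bar> \<le> 2 ^ m * (real (card D) ^ m * E)" .
  qed
  also have "\<dots> = real (card A) * (2 ^ m * (real (card D) ^ m * E))" by simp
  also have "\<dots> \<le> (real (card J) * 2 ^ m) * (2 ^ m * (real (card D) ^ m * E))"
  proof (rule mult_right_mono)
    have "card A \<le> (\<Sum>t\<in>J. card (Pow (S t)))"
      unfolding A_def using assms(4) by (rule card_UN_le)
    also have "\<dots> \<le> (\<Sum>t\<in>J. 2 ^ m)"
    proof (rule sum_mono)
      fix t assume "t \<in> J"
      then have "finite (S t)" using S(1) assms(1) finite_subset by blast
      then show "card (Pow (S t)) \<le> 2 ^ m"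
        using S(2)[OF \<open>t \<in> J\<close>] by (simp add: card_Pow power_increasing)
    qed
    finally have "card A \<le> card J * 2 ^ m" by simp
    then show "real (card A) \<le> real (card J) * 2 ^ m"
      by (metis of_nat_le_iff of_nat_mult of_nat_numeral of_nat_power)
  qed (use E in simp)
  also have "\<dots> = real (card J) * 4 ^ m * real (card D) ^ m * E"
    using power_mult_distrib[of "2::real" 2 m] by (simp add: mult_ac)
  finally show ?thesis unfolding E_def .
qed

lemma depends_only_on_fun_upd_diff:
  fixes u :: "('i \<Rightarrow> 'a) \<Rightarrow> 'b::ab_group_add"
  assumes u: "depends_only_on I D S u" and "j \<in> I" "\<alpha> \<in> D" "\<beta> \<in> D"
  shows "depends_only_on I D (if j \<in> S then S - {j} else {}) (\<lambda>x. u (x(j := \<alpha>)) - u (x(j := \<beta>)))"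
  unfolding depends_only_on_def
proof (intro ballI impI)
  fix x y assume x: "x \<in> PiE I (\<lambda>_. D)" and y: "y \<in> PiE I (\<lambda>_. D)"
    and agree: "\<forall>i\<in>(if j \<in> S then S - {j} else {}). x i = y i"
  show "u (x(j := \<alpha>)) - u (x(j := \<beta>)) = u (y(j := \<alpha>)) - u (y(j := \<beta>))"
  proof (cases "j \<in> S")
    case True
    then have "u (x(j := c)) = u (y(j := c))" if "c \<in> D" for c
      using agree x y that assms(2) by (intro depends_only_onD[OF u]) (auto simp: fun_upd_PiE_mem)
    then show ?thesis using assms(3,4) by simp
  next
    case False
    then have "u (w(j := \<alpha>)) = u (w(j := \<beta>))" if "w \<in> PiE I (\<lambda>_. D)" for w
      using that assms(2-4) by (intro depends_only_onD[OF u]) (auto simp: fun_upd_PiE_mem)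
    then show ?thesis using x y by simp
  qed
qed

definition regret :: "'a set \<Rightarrow> 'i \<Rightarrow> (('i \<Rightarrow> 'a) \<Rightarrow> real) \<Rightarrow> ('i \<Rightarrow> 'a) \<Rightarrow> real" where
  "regret D j f X = Max ((\<lambda>a. f (X(j := a))) ` D) - f X"

lemma regret_fun_upd_nonneg:
  assumes "finite D" "a \<in> D"
  shows "regret D j f (X(j := a)) \<ge> 0"
  using assms by (auto simp: regret_def intro!: Max_ge)

lemma abs_fun_upd_diff_le_sum_regret:
  assumes "finite D" "\<alpha> \<in> D" "\<beta> \<in> D"
  shows "\<bar>f (X(j := \<alpha>)) - f (X(j := \<beta>))\<bar> \<le> (\<Sum>a\<in>D. regret D j f (X(j := a)))"
proof -
  have r: "0 \<le> regret D j f (X(j := c))" "regret D j f (X(j := c)) \<le> (\<Sum>a\<in>D. regret D j f (X(j := a)))"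
    if "c \<in> D" for c
    using assms(1) that by (auto intro: member_le_sum regret_fun_upd_nonneg)
  have "f (X(j := \<alpha>)) - f (X(j := \<beta>)) = regret D j f (X(j := \<beta>)) - regret D j f (X(j := \<alpha>))"
    by (simp add: regret_def)
  with r[OF assms(2)] r[OF assms(3)] show ?thesis
    unfolding abs_le_iff by linarith
qed

lemma sum_abs_fun_upd_diff_le_sum_regret:
  assumes "j \<in> I" "finite D" "\<alpha> \<in> D" "\<beta> \<in> D"
  shows "(\<Sum>X\<in>PiE I (\<lambda>_. D). \<bar>f (X(j := \<alpha>)) - f (X(j := \<beta>))\<bar>)
    \<le> real (card D) * (\<Sum>X\<in>PiE I (\<lambda>_. D). regret D j f X)"
proof -
  have "(\<Sum>X\<in>PiE I (\<lambda>_. D). \<bar>f (X(j := \<alpha>)) - f (X(j := \<beta>))\<bar>)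
      \<le> (\<Sum>X\<in>PiE I (\<lambda>_. D). \<Sum>a\<in>D. regret D j f (X(j := a)))"
    using assms(2-4) by (intro sum_mono abs_fun_upd_diff_le_sum_regret)
  also have "\<dots> = real (card D) * (\<Sum>X\<in>PiE I (\<lambda>_. D). regret D j f X)"
    using assms(1) by (rule sum_PiE_sum_fun_upd)
  finally show ?thesis .
qed

lemma fun_upd_diff_le_expectation_regret:
  fixes f :: "('i \<Rightarrow> 'a) \<Rightarrow> real" and ft :: "'t \<Rightarrow> ('i \<Rightarrow> 'a) \<Rightarrow> real"
  assumes "finite I" "j \<in> I" "finite D" "D \<noteq> {}" "finite J"
    and "z \<in> PiE I (\<lambda>_. D)" "\<alpha> \<in> D" "\<beta> \<in> D"
    and f: "\<And>x. x \<in> PiE I (\<lambda>_. D) \<Longrightarrow> f x = (\<Sum>t\<in>J. ft t x)"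
    and S: "\<And>t. t \<in> J \<Longrightarrow> S t \<subseteq> I" "\<And>t. t \<in> J \<Longrightarrow> card (S t) \<le> Suc m"
      "\<And>t. t \<in> J \<Longrightarrow> depends_only_on I D (S t) (ft t)"
  shows "f (z(j := \<alpha>)) - f (z(j := \<beta>))
    \<le> real (card J) * 4 ^ m * real (card D) ^ Suc m
      * measure_pmf.expectation (pmf_of_set (PiE I (\<lambda>_. D))) (regret D j f)"
proof -
  let ?O = "PiE I (\<lambda>_. D)"
  define d where "d = (\<lambda>x. f (x(j := \<alpha>)) - f (x(j := \<beta>)))"
  define S' where "S' = (\<lambda>t. if j \<in> S t then S t - {j} else {})"
  have "\<bar>d z\<bar> \<le> real (card J) * 4 ^ m * real (card D) ^ m * ((\<Sum>x\<in>?O. \<bar>d x\<bar>) / card ?O)"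
  proof (rule junta_sum_bound[where S = S' and u = "\<lambda>t x. ft t (x(j := \<alpha>)) - ft t (x(j := \<beta>))"])
    show "d x = (\<Sum>t\<in>J. ft t (x(j := \<alpha>)) - ft t (x(j := \<beta>)))" if "x \<in> ?O" for x
      using f that assms(2,7,8) by (simp add: d_def fun_upd_PiE_mem sum_subtractf)
    show "S' t \<subseteq> I" if "t \<in> J" for t
      using S(1)[OF that] by (auto simp: S'_def)
    show "card (S' t) \<le> m" if "t \<in> J" for t
      using S(1,2)[OF that] finite_subset[OF S(1)[OF that] assms(1)] by (auto simp: S'_def)
    show "depends_only_on I D (S' t) (\<lambda>x. ft t (x(j := \<alpha>)) - ft t (x(j := \<beta>)))" if "t \<in> J" for t
      unfolding S'_def using S(3)[OF that] assms(2,7,8) by (rule depends_only_on_fun_upd_diff)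
  qed (use assms in auto)
  also have "\<dots> \<le> real (card J) * 4 ^ m * real (card D) ^ m
      * (real (card D) * (\<Sum>X\<in>?O. regret D j f X) / card ?O)"
    unfolding d_def using assms(2,3,7,8)
    by (intro mult_left_mono divide_right_mono sum_abs_fun_upd_diff_le_sum_regret) auto
  also have "\<dots> = real (card J) * 4 ^ m * real (card D) ^ Suc m
      * measure_pmf.expectation (pmf_of_set ?O) (regret D j f)"
    using assms(1,3,4) by (simp add: integral_pmf_of_set finite_PiE PiE_eq_empty_iff)
  finally show ?thesis unfolding d_def by simp
qed

lemma expectation_regret_lower_bound:
  fixes f :: "(nat \<Rightarrow> 'a) \<Rightarrow> real" and ft :: "'t \<Rightarrow> (nat \<Rightarrow> 'a) \<Rightarrow> real"
  assumes "finite D" "D \<noteq> {}" "finite J" "J \<noteq> {}"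
    and dep: "\<forall>t\<in>J. depends_on_at_most (Suc m) n D (ft t)"
    and f: "\<forall>x\<in>PiE {0..n} (\<lambda>_. D). f x = (\<Sum>t\<in>J. ft t x)"
  shows "1 / 4 ^ m * (1 / real (card J)) * (1 / real (card D) ^ Suc m)
      * Max {f (x(0 := a)) - f (x(0 := b)) | a b x. a \<in> D \<and> b \<in> D \<and> x \<in> PiE {0..n} (\<lambda>_. D)}
    \<le> measure_pmf.expectation (pmf_of_set (PiE {0..n} (\<lambda>_. D)))
      (\<lambda>X. Max ((\<lambda>a. f (X(0 := a))) ` D) - f X)"
proof -
  let ?O = "PiE {0..n} (\<lambda>_. D)"
  let ?M = "{f (x(0 := a)) - f (x(0 := b)) | a b x. a \<in> D \<and> b \<in> D \<and> x \<in> ?O}"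
  define E where "E = measure_pmf.expectation (pmf_of_set ?O) (regret D 0 f)"
  define K where "K = real (card J) * 4 ^ m * real (card D) ^ Suc m"
  obtain S where S: "\<And>t. t \<in> J \<Longrightarrow>
      S t \<subseteq> {0..n} \<and> card (S t) \<le> Suc m \<and> depends_only_on {0..n} D (S t) (ft t)"
    using dep unfolding depends_on_at_most_iff by metis
  have "?M = (\<lambda>(a, b, x). f (x(0 := a)) - f (x(0 := b))) ` (D \<times> D \<times> ?O)"
    by (auto; force)
  moreover have "finite ?O" "?O \<noteq> {}"
    using assms(1,2) by (auto simp: finite_PiE PiE_eq_empty_iff)
  ultimately have "Max ?M \<in> ?M"
    using assms(1,2) by (intro Max_in) auto
  then obtain \<alpha> \<beta> z where "\<alpha> \<in> D" "\<beta> \<in> D" "z \<in> ?O"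
    and "Max ?M = f (z(0 := \<alpha>)) - f (z(0 := \<beta>))"
    by blast
  note \<open>Max ?M = _\<close>
  also have "\<dots> \<le> K * E"
    unfolding K_def E_def using \<open>\<alpha> \<in> D\<close> \<open>\<beta> \<in> D\<close> \<open>z \<in> ?O\<close> assms(1-3) f S
    by (intro fun_upd_diff_le_expectation_regret[where S = S]) auto
  finally have "Max ?M \<le> K * E" .
  moreover have "K > 0"
    unfolding K_def using assms(1-4) by (simp add: card_gt_0_iff)
  ultimately have "1 / 4 ^ m * (1 / real (card J)) * (1 / real (card D) ^ Suc m) * Max ?M \<le> E"
    unfolding K_def by (simp add: field_simps)
  then show ?thesis unfolding E_def regret_def .
qed

theorem theorem2:
  shows "\<forall>k::nat. k \<ge> 1 \<longrightarrow> (\<exists>c::real. c > 0 \<and>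
    (\<forall>(D::nat set) (L::nat) (n::nat) (T::nat)
       (ft :: nat \<Rightarrow> (nat \<Rightarrow> nat) \<Rightarrow> real) (f :: (nat \<Rightarrow> nat) \<Rightarrow> real).
       finite D \<and> card D = 2 ^ L \<and> T \<ge> 1 \<and>
       (\<forall>t\<in>{1..T}. depends_on_at_most k n D (ft t)) \<and>
       (\<forall>x\<in>PiE {0..n} (\<lambda>_. D). f x = (\<Sum>t=1..T. ft t x))
       \<longrightarrow>
       measure_pmf.expectation (pmf_of_set (PiE {0..n} (\<lambda>_. D)))
          (\<lambda>X. Max ((\<lambda>a. f (X(0 := a))) ` D) - f X)
       \<ge> c * (1 / real T) * (1 / real (card D) ^ k) *
          Max {f (x(0 := a)) - f (x(0 := b)) | a b x.
                 a \<in> D \<and> b \<in> D \<and> x \<in> PiE {0..n} (\<lambda>_. D)}))"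
  apply (intro allI impI)
  subgoal for k
    apply (intro exI[of _ "1 / 4 ^ (k - 1)"] conjI allI impI)
     apply simp
    subgoal for D L n T ft f
    proof (elim conjE)
      assume "k \<ge> 1" "finite D" "card D = 2 ^ L" "T \<ge> 1"
        and "\<forall>t\<in>{1..T}. depends_on_at_most k n D (ft t)"
        and "\<forall>x\<in>PiE {0..n} (\<lambda>_. D). f x = (\<Sum>t=1..T. ft t x)"
      \<comment> \<open>\<open>card D = 2 ^ L\<close> only serves to make \<open>D\<close> nonempty\<close>
      moreover have "D \<noteq> {}"
        using \<open>card D = 2 ^ L\<close> by (metis card.empty power_not_zero zero_neq_numeral)
      moreover have "Suc (k - 1) = k" using \<open>k \<ge> 1\<close> by simp
      ultimately show ?thesis
        using expectation_regret_lower_bound[of D "{1..T}" "k - 1" n ft f] by simp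
    qed
    done
  done

end
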